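(* Let $A=\{a_1,\dots,a_k\}$ be finite and $u_1,u_2:A\to\mathbb{R}$. In every subgame-perfect Nash equilibrium $\sigma=(\sigma_1,\sigma_2)$ of the two-player Price \& Choose game, player 1's price vector is $\sigma_1=p^*$, where $p^*_j=u_2(a_j)-\mathrm{Avg}_2$ for all $j$ (the unique price vector in $P$ making player 2 indifferent among all options).
   Context: Two players with quasi-linear utilities: if option $a\in A$ is selected and player $i$ receives transfer $t_i$, player $i$'s utility is $u_i(a)+t_i$. Let $P=\{p\in\mathbb{R}^k:\sum_{j=1}^k p_j=0\}$ and $\mathrm{Avg}_2=\frac1k\sum_{j}u_2(a_j)$. The Price \& Choose game: player 1 chooses $p\in P$; then player 2, having observed $p$, chooses $a_j\in A$ and pays $p_j$ to player 1; payoffs $g_1(p,a_j)=u_1(a_j)+p_j$, $g_2(p,a_j)=u_2(a_j)-p_j$. A pure strategy profile $\sigma=(\sigma_1,\sigma_2)$, $\sigma_1\in P$, $\sigma_2:P\to A$, is a subgame-perfect Nash equilibrium if $\sigma_2(p)\in\arg\max_{a}g_2(p,a)$ for every $p\in P$ and $g_1(\sigma_1,\sigma_2(\sigma_1))\ge g_1(p,\sigma_2(p))$ for all $p\in P$. *)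

theory Defs
  imports Complex_Main
begin

text \<open>Options A = UNIV of a finite type 'a (so k = CARD('a)); a price vector
  assigns a real price to each option, i.e. p_j = p a_j.\<close>

definition PriceSet :: "('a::finite \<Rightarrow> real) set" where
  "PriceSet = {p. (\<Sum>a\<in>UNIV. p a) = 0}"

definition Avg2 :: "('a::finite \<Rightarrow> real) \<Rightarrow> real" where
  "Avg2 u2 = (\<Sum>a\<in>UNIV. u2 a) / real (card (UNIV :: 'a set))"

definition g1 :: "('a \<Rightarrow> real) \<Rightarrow> ('a \<Rightarrow> real) \<Rightarrow> 'a \<Rightarrow> real" where
  "g1 u1 p a = u1 a + p a"

definition g2 :: "('a \<Rightarrow> real) \<Rightarrow> ('a \<Rightarrow> real) \<Rightarrow> 'a \<Rightarrow> real" where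
  "g2 u2 p a = u2 a - p a"

text \<open>Pure-strategy subgame-perfect Nash equilibrium of Price and Choose.
  sigma2 is a function on price vectors; only its values on PriceSet matter.\<close>
definition is_SPNE ::
  "('a::finite \<Rightarrow> real) \<Rightarrow> ('a \<Rightarrow> real) \<Rightarrow> ('a \<Rightarrow> real) \<Rightarrow> (('a \<Rightarrow> real) \<Rightarrow> 'a) \<Rightarrow> bool" where
  "is_SPNE u1 u2 \<sigma>1 \<sigma>2 \<longleftrightarrow>
     \<sigma>1 \<in> PriceSet \<and>
     (\<forall>p\<in>PriceSet. \<forall>b. g2 u2 p b \<le> g2 u2 p (\<sigma>2 p)) \<and>
     (\<forall>p\<in>PriceSet. g1 u1 p (\<sigma>2 p) \<le> g1 u1 \<sigma>1 (\<sigma>2 \<sigma>1))"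

end

theory Submission
  imports Defs
begin

text \<open>Let \<open>b\<close> be player 2's answer to \<open>\<sigma>1\<close>. Player 2 picks an option minimising the excess
  \<open>\<sigma>1 - p\<^sup>*\<close>, whose entries sum to zero; so if \<open>\<sigma>1 \<noteq> p\<^sup>*\<close> the excess \<open>-d\<close> at \<open>b\<close> is negative.
  Player 1 then deviates to \<open>p\<^sup>*\<close> with option \<open>b\<close> discounted by \<open>d\<close>, the discount being
  recovered evenly from all options: player 2 still strictly prefers \<open>b\<close>, and player 1
  earns \<open>d / k\<close> more than at \<open>\<sigma>1\<close>.\<close>

definition indifference_price :: "('a::finite \<Rightarrow> real) \<Rightarrow> 'a \<Rightarrow> real" where
  "indifference_price u2 a = u2 a - Avg2 u2"

definition discount_price :: "('a::finite \<Rightarrow> real) \<Rightarrow> 'a \<Rightarrow> real \<Rightarrow> 'a \<Rightarrow> real" where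
  "discount_price u2 b d a =
     indifference_price u2 a + d / real (card (UNIV :: 'a set)) - (if a = b then d else 0)"

lemma sum_eq_0_if_min_nonneg:
  fixes f :: "'a \<Rightarrow> 'b::ordered_comm_monoid_add"
  assumes "finite A" "sum f A = 0" "b \<in> A" "\<And>a. a \<in> A \<Longrightarrow> f b \<le> f a" "0 \<le> f b"
  shows "\<forall>a\<in>A. f a = 0"
  using assms order_trans sum_nonneg_eq_0_iff by metis

lemma sum_indifference_price: "(\<Sum>a\<in>UNIV. indifference_price u2 a) = 0"
  by (simp add: indifference_price_def Avg2_def sum_subtractf)

lemma g2_eq_Avg2_minus_excess:
  "g2 u2 p a = Avg2 u2 - (p a - indifference_price u2 a)"
  by (simp add: g2_def indifference_price_def)

lemma discount_price_in_PriceSet: "discount_price u2 b d \<in> PriceSet"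
proof -
  have "(\<Sum>a\<in>UNIV. (if a = b then d else 0)) = d"
    by simp
  then show ?thesis
    by (simp add: PriceSet_def discount_price_def sum.distrib sum_subtractf
        sum_indifference_price)
qed

lemma best_response_to_discount_price:
  assumes "0 < d" and "\<And>c. g2 u2 (discount_price u2 b d) c \<le> g2 u2 (discount_price u2 b d) a"
  shows "a = b"
  using assms(2)[of b] \<open>0 < d\<close>
  by (auto simp: g2_eq_Avg2_minus_excess discount_price_def split: if_splits)

lemma best_response_priced_below_indifference:
  assumes "p \<in> PriceSet" "p \<noteq> indifference_price u2"
    and "\<And>c. g2 u2 p c \<le> g2 u2 p b"
  shows "p b < indifference_price u2 b"
proof (rule ccontr)
  assume "\<not> p b < indifference_price u2 b"
  moreover have "(\<Sum>a\<in>UNIV. p a - indifference_price u2 a) = 0"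
    using \<open>p \<in> PriceSet\<close> by (simp add: PriceSet_def sum_subtractf sum_indifference_price)
  moreover have "p b - indifference_price u2 b \<le> p a - indifference_price u2 a" for a
    using assms(3)[of a] by (simp add: g2_eq_Avg2_minus_excess)
  ultimately have "\<forall>a\<in>UNIV. p a - indifference_price u2 a = 0"
    by (intro sum_eq_0_if_min_nonneg[where b = b]) auto
  with \<open>p \<noteq> indifference_price u2\<close> show False
    by auto
qed

theorem mainTheorem3:
  fixes u1 u2 :: "'a::finite \<Rightarrow> real"
    and \<sigma>1 :: "'a \<Rightarrow> real" and \<sigma>2 :: "('a \<Rightarrow> real) \<Rightarrow> 'a"
  assumes "is_SPNE u1 u2 \<sigma>1 \<sigma>2"
  shows "\<sigma>1 = (\<lambda>a. u2 a - Avg2 u2)"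
proof (rule ccontr)
  assume "\<sigma>1 \<noteq> (\<lambda>a. u2 a - Avg2 u2)"
  then have "\<sigma>1 \<noteq> indifference_price u2"
    by (simp add: indifference_price_def[abs_def])
  have \<sigma>1: "\<sigma>1 \<in> PriceSet" and best_response: "\<And>p c. p \<in> PriceSet \<Longrightarrow> g2 u2 p c \<le> g2 u2 p (\<sigma>2 p)"
    and no_deviation: "\<And>p. p \<in> PriceSet \<Longrightarrow> g1 u1 p (\<sigma>2 p) \<le> g1 u1 \<sigma>1 (\<sigma>2 \<sigma>1)"
    using assms by (auto simp: is_SPNE_def)
  define b where "b = \<sigma>2 \<sigma>1"
  define d where "d = indifference_price u2 b - \<sigma>1 b"
  have "0 < d"
    using best_response_priced_below_indifference[OF \<sigma>1 \<open>\<sigma>1 \<noteq> indifference_price u2\<close>]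
      best_response[OF \<sigma>1] by (simp add: d_def b_def)
  have "\<sigma>2 (discount_price u2 b d) = b"
    using best_response_to_discount_price[OF \<open>0 < d\<close>] best_response discount_price_in_PriceSet
    by blast
  then have "u1 b + \<sigma>1 b + d / real (card (UNIV :: 'a set)) \<le> u1 b + \<sigma>1 b"
    using no_deviation[OF discount_price_in_PriceSet, of u2 b d]
    by (simp add: g1_def b_def d_def discount_price_def)
  with \<open>0 < d\<close> show False
    by (simp add: divide_le_0_iff)
qed

end
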